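(* For $1\le t\le N$, under the standing assumptions, if $\gamma<\frac1{\alpha_B\mathrm{tr}(\mathbf H^{(q)})}$ then $$\mathcal M_B^{(q)}\circ\mathbf S_t\preceq\frac{\alpha_B\,\mathrm{tr}\big([\mathcal I-(\mathcal I-\gamma\widetilde{\mathcal T}^{(q)})^t]\circ\mathbf B_0\big)}{\gamma(1-\gamma\alpha_B\mathrm{tr}(\mathbf H^{(q)}))}\,\mathbf H^{(q)}.$$
   Context: $\mathbf H^{(q)}=\mathbb E[\mathcal Q_d(\mathbf x)\mathcal Q_d(\mathbf x)^\top]$ (positive definite, finite trace), where $\mathcal Q_d$ is an unbiased random data quantizer; $\mathbf X^{(q)}=\mathcal Q_d(\mathbf X)$ for a batch $\mathbf X$ of $B$ i.i.d. samples, each row quantized independently. Linear operators on symmetric matrices $\mathbf A$: $\mathcal I\circ\mathbf A=\mathbf A$; $\mathcal M_B^{(q)}\circ\mathbf A=\mathbb E[\frac1{B^2}\mathbf X^{(q)\top}\mathbf X^{(q)}\mathbf A\mathbf X^{(q)\top}\mathbf X^{(q)}]$; $\mathcal T_B^{(q)}$ defined by $(\mathcal I-\gamma\mathcal T_B^{(q)})\circ\mathbf A=\mathbb E[(\mathbf I-\frac{\gamma}{B}\mathbf X^{(q)\top}\mathbf X^{(q)})\mathbf A(\mathbf I-\frac{\gamma}{B}\mathbf X^{(q)\top}\mathbf X^{(q)})]$; $\widetilde{\mathcal T}^{(q)}$ defined by $(\mathcal I-\gamma\widetilde{\mathcal T}^{(q)})\circ\mathbf A=(\mathbf I-\gamma\mathbf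 H^{(q)})\mathbf A(\mathbf I-\gamma\mathbf H^{(q)})$. Fourth-moment assumption: for all PSD $\mathbf A$, $\mathcal M_B^{(q)}\circ\mathbf A\preceq\alpha_B\mathrm{tr}(\mathbf H^{(q)}\mathbf A)\mathbf H^{(q)}$. $\mathbf B_0=\mathbb E[\boldsymbol\eta_0\otimes\boldsymbol\eta_0]$ with $\boldsymbol\eta_0=\mathbf w_0-\mathbf w^{(q)*}$, $\mathbf B_t=(\mathcal I-\gamma\mathcal T_B^{(q)})^t\circ\mathbf B_0$, $\mathbf S_t=\sum_{k=0}^{t-1}\mathbf B_k$. *)

theory Defs
  imports "HOL-Analysis.Analysis" "HOL-Probability.Probability"
begin

definition psd :: "real^'n^'n \<Rightarrow> bool" where
  "psd A \<longleftrightarrow> transpose A = A \<and> (\<forall>x. 0 \<le> x \<bullet> (A *v x))"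

definition pos_def :: "real^'n^'n \<Rightarrow> bool" where
  "pos_def A \<longleftrightarrow> transpose A = A \<and> (\<forall>x. x \<noteq> 0 \<longrightarrow> 0 < x \<bullet> (A *v x))"

definition loewner_le :: "real^'n^'n \<Rightarrow> real^'n^'n \<Rightarrow> bool" (infix "\<preceq>\<^sub>L" 50) where
  "A \<preceq>\<^sub>L B \<longleftrightarrow> psd (B - A)"

definition outer :: "real^'n \<Rightarrow> real^'n \<Rightarrow> real^'n^'n" where
  "outer u v = (\<chi> i j. u $ i * v $ j)"

definition mat_expect :: "'a measure \<Rightarrow> ('a \<Rightarrow> real^'n^'m) \<Rightarrow> real^'n^'m" where
  "mat_expect M F = (\<chi> i j. \<integral>\<omega>. F \<omega> $ i $ j \<partial>M)"

text \<open>Batch size B = CARD('b); the quantized batch X^(q) : \<omega> \<mapsto> real^'n^'b (rows = samples).\<close>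
definition gram :: "real^'n^'b \<Rightarrow> real^'n^'n" where
  "gram X = transpose X ** X"

definition M_op :: "'a measure \<Rightarrow> ('a \<Rightarrow> real^'n^'b::finite) \<Rightarrow> real^'n^'n \<Rightarrow> real^'n^'n" where
  "M_op M Xq A = mat_expect M (\<lambda>\<omega>. (1 / (real CARD('b))^2) *\<^sub>R (gram (Xq \<omega>) ** A ** gram (Xq \<omega>)))"

definition IT_op :: "'a measure \<Rightarrow> ('a \<Rightarrow> real^'n^'b::finite) \<Rightarrow> real \<Rightarrow> real^'n^'n \<Rightarrow> real^'n^'n" where
  "IT_op M Xq \<gamma> A = mat_expect M (\<lambda>\<omega>.
     (mat 1 - (\<gamma> / real CARD('b)) *\<^sub>R gram (Xq \<omega>)) ** A ** (mat 1 - (\<gamma> / real CARD('b)) *\<^sub>R gram (Xq \<omega>)))"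

definition ITt_op :: "real^'n^'n \<Rightarrow> real \<Rightarrow> real^'n^'n \<Rightarrow> real^'n^'n" where
  "ITt_op H \<gamma> A = (mat 1 - \<gamma> *\<^sub>R H) ** A ** (mat 1 - \<gamma> *\<^sub>R H)"

definition B_iter :: "'a measure \<Rightarrow> ('a \<Rightarrow> real^'n^'b::finite) \<Rightarrow> real \<Rightarrow> real^'n^'n \<Rightarrow> nat \<Rightarrow> real^'n^'n" where
  "B_iter M Xq \<gamma> B0 t = (IT_op M Xq \<gamma> ^^ t) B0"

definition S_sum :: "'a measure \<Rightarrow> ('a \<Rightarrow> real^'n^'b::finite) \<Rightarrow> real \<Rightarrow> real^'n^'n \<Rightarrow> nat \<Rightarrow> real^'n^'n" where
  "S_sum M Xq \<gamma> B0 t = (\<Sum>k<t. B_iter M Xq \<gamma> B0 k)"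

end

theory Submission
  imports Defs
begin

(* Write C for ITt_op H gamma, i.e. C A = (I - gamma H) A (I - gamma H). Expanding the square
   inside the expectation splits the step operator as IT_op A = C A + gamma^2 (M A - H A H), so the
   fourth-moment bound gives B_(k+1) <= C B_k + gamma^2 alpha tr(H B_k) H in the Loewner order.
   Unrolling and pairing with H bounds tr(H B_j) by tr(H C^j B_0) plus a convolution of the earlier
   tr(H B_i) with the kernel tr(H C^k H). Since H^2 <= M I <= alpha tr(H) H, the matrix H - gamma
   H^2 is psd, and then gamma * sum_(k<n) tr(H C^k Y) telescopes to at most tr Y - tr(C^n Y). With
   Y = H the kernel sums to at most tr H / gamma, so s = tr(H S_t) satisfies s <= tr(B_0 - C^t B_0)
   / gamma + gamma alpha tr(H) s; solving for s and applying the fourth-moment bound to S_t gives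
   the claim. *)

lemma matrix_add_rdistrib: "(A + B) ** C = A ** C + B ** (C :: 'a::semiring_1^'p^'n)"
  by (simp add: vec_eq_iff matrix_matrix_mult_def sum.distrib distrib_right)

lemma matrix_diff_ldistrib: "A ** (B - C) = A ** B - A ** (C :: 'a::ring_1^'p^'n)"
  by (simp add: vec_eq_iff matrix_matrix_mult_def sum_subtractf right_diff_distrib)

lemma matrix_diff_rdistrib: "(A - B) ** C = A ** C - B ** (C :: 'a::ring_1^'p^'n)"
  by (simp add: vec_eq_iff matrix_matrix_mult_def sum_subtractf left_diff_distrib)

lemma matrix_sum_ldistrib: "A ** (\<Sum>k\<in>S. F k) = (\<Sum>k\<in>S. A ** (F k :: 'a::semiring_1^'p^'n))"
  by (induction S rule: infinite_finite_induct) (simp_all add: matrix_add_ldistrib)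

lemmas matrix_algebra_simps =
  matrix_add_ldistrib matrix_add_rdistrib matrix_diff_ldistrib matrix_diff_rdistrib
  scalar_matrix_assoc[symmetric] matrix_scalar_ac matrix_mul_assoc

lemma transpose_add: "transpose (A + B) = transpose A + transpose B"
  by (simp add: vec_eq_iff transpose_def)

lemma transpose_diff: "transpose (A - B) = transpose A - transpose (B :: 'a::ab_group_add^'n^'m)"
  by (simp add: vec_eq_iff transpose_def)

lemma trace_scaleR: "trace (c *\<^sub>R A) = c * trace (A :: real^'n^'n)"
  by (simp add: trace_def sum_distrib_left)

lemma trace_sum: "trace (\<Sum>k\<in>S. F k) = (\<Sum>k\<in>S. trace (F k :: 'a::comm_semiring_1^'n^'n))"
  by (induction S rule: infinite_finite_induct) (simp_all add: trace_add trace_0[unfolded mat_0])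

lemma inner_transpose_mult: "x \<bullet> (transpose C *v y) = (C *v x) \<bullet> (y :: real^'n)"
  by (simp add: dot_lmul_matrix[symmetric] inner_commute)

lemma psd_add: "psd A \<Longrightarrow> psd B \<Longrightarrow> psd (A + B)"
  unfolding psd_def by (simp add: matrix_vector_mult_add_rdistrib inner_add_right transpose_add)

lemma psd_scaleR: "psd A \<Longrightarrow> 0 \<le> c \<Longrightarrow> psd (c *\<^sub>R A)"
  unfolding psd_def by (simp add: transpose_scalar scaleR_matrix_vector_assoc[symmetric])

lemma psd_0: "psd 0"
  unfolding psd_def by (simp add: transpose_def vec_eq_iff)

lemma psd_sum: "(\<And>k. k \<in> S \<Longrightarrow> psd (F k)) \<Longrightarrow> psd (\<Sum>k\<in>S. F k)"
  by (induction S rule: infinite_finite_induct) (simp_all add: psd_0 psd_add)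

lemma psd_mat_1: "psd (mat 1)"
  unfolding psd_def by simp

lemma psd_congruence:
  assumes "psd A"
  shows "psd (transpose C ** A ** C)"
proof -
  have "x \<bullet> ((transpose C ** A ** C) *v x) = (C *v x) \<bullet> (A *v (C *v x))" for x
    by (simp only: matrix_vector_mul_assoc[symmetric] inner_transpose_mult)
  then show ?thesis
    using assms unfolding psd_def by (simp add: matrix_transpose_mul matrix_mul_assoc)
qed

lemma psd_sandwich: "psd A \<Longrightarrow> transpose C = C \<Longrightarrow> psd (C ** A ** C)"
  using psd_congruence[of A C] by simp

lemma psd_outer: "psd (outer v v)"
proof -
  have "outer v v *v x = (v \<bullet> x) *\<^sub>R v" for x
    by (simp add: vec_eq_iff matrix_vector_mult_def outer_def inner_vec_def sum_distrib_left mult_ac)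
  moreover have "transpose (outer v v) = outer v v"
    by (simp add: vec_eq_iff transpose_def outer_def mult.commute)
  ultimately show ?thesis
    unfolding psd_def by (simp add: inner_commute)
qed

lemma loewner_le_trans [trans]: "A \<preceq>\<^sub>L B \<Longrightarrow> B \<preceq>\<^sub>L C \<Longrightarrow> A \<preceq>\<^sub>L C"
  unfolding loewner_le_def using psd_add[of "B - A" "C - B"] by simp

lemma loewner_le_scaleR_right: "psd H \<Longrightarrow> c \<le> d \<Longrightarrow> c *\<^sub>R H \<preceq>\<^sub>L d *\<^sub>R H"
  unfolding loewner_le_def using psd_scaleR[of H "d - c"] by (simp add: scaleR_diff_left)

(* The dual cone of the psd cone. It is the psd cone itself, but that needs a spectral decomposition;
   the matrices we place in it (H and B0) are second moments, which lie in it directly. *)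
definition psd_dual :: "real^'n^'n \<Rightarrow> bool" where
  "psd_dual Y \<longleftrightarrow> (\<forall>K. psd K \<longrightarrow> 0 \<le> trace (K ** Y))"

lemma psd_dual_trace_mult_nonneg: "psd_dual Y \<Longrightarrow> psd K \<Longrightarrow> 0 \<le> trace (Y ** K)"
  unfolding psd_dual_def by (metis trace_mul_sym)

lemma psd_dual_trace_nonneg: "psd_dual Y \<Longrightarrow> 0 \<le> trace Y"
  unfolding psd_dual_def using psd_mat_1 matrix_mul_lid[of Y] by metis

definition mat_integrable :: "'a measure \<Rightarrow> ('a \<Rightarrow> real^'n^'m) \<Rightarrow> bool" where
  "mat_integrable M F \<longleftrightarrow> (\<forall>i j. integrable M (\<lambda>\<omega>. F \<omega> $ i $ j))"

lemma mat_integrable_add: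
  "mat_integrable M F \<Longrightarrow> mat_integrable M G \<Longrightarrow> mat_integrable M (\<lambda>\<omega>. F \<omega> + G \<omega>)"
  unfolding mat_integrable_def by auto

lemma mat_integrable_diff:
  "mat_integrable M F \<Longrightarrow> mat_integrable M G \<Longrightarrow> mat_integrable M (\<lambda>\<omega>. F \<omega> - G \<omega>)"
  unfolding mat_integrable_def by auto

lemma mat_integrable_scaleR: "mat_integrable M F \<Longrightarrow> mat_integrable M (\<lambda>\<omega>. c *\<^sub>R F \<omega>)"
  unfolding mat_integrable_def by auto

lemma mat_integrable_const: "finite_measure M \<Longrightarrow> mat_integrable M (\<lambda>\<omega>. A)"
  unfolding mat_integrable_def by (auto intro: finite_measure.integrable_const)

lemma mat_integrable_mult_left: "mat_integrable M F \<Longrightarrow> mat_integrable M (\<lambda>\<omega>. A ** F \<omega>)"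
  unfolding mat_integrable_def matrix_matrix_mult_def by auto

lemma mat_integrable_mult_right: "mat_integrable M F \<Longrightarrow> mat_integrable M (\<lambda>\<omega>. F \<omega> ** A)"
  unfolding mat_integrable_def matrix_matrix_mult_def by auto

lemma mat_expect_add: "mat_integrable M F \<Longrightarrow> mat_integrable M G \<Longrightarrow>
    mat_expect M (\<lambda>\<omega>. F \<omega> + G \<omega>) = mat_expect M F + mat_expect M G"
  unfolding mat_integrable_def mat_expect_def by (simp add: vec_eq_iff)

lemma mat_expect_diff: "mat_integrable M F \<Longrightarrow> mat_integrable M G \<Longrightarrow>
    mat_expect M (\<lambda>\<omega>. F \<omega> - G \<omega>) = mat_expect M F - mat_expect M G"
  unfolding mat_integrable_def mat_expect_def by (simp add: vec_eq_iff)

lemma mat_expect_scaleR: "mat_expect M (\<lambda>\<omega>. c *\<^sub>R F \<omega>) = c *\<^sub>R mat_expect M F"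
  unfolding mat_expect_def by (simp add: vec_eq_iff)

lemma mat_expect_const: "prob_space M \<Longrightarrow> mat_expect M (\<lambda>\<omega>. A) = A"
  unfolding mat_expect_def by (simp add: vec_eq_iff prob_space.prob_space)

lemma mat_expect_mult_left:
  "mat_integrable M F \<Longrightarrow> mat_expect M (\<lambda>\<omega>. A ** F \<omega>) = A ** mat_expect M F"
  unfolding mat_integrable_def mat_expect_def by (simp add: vec_eq_iff matrix_matrix_mult_def)

lemma mat_expect_mult_right:
  "mat_integrable M F \<Longrightarrow> mat_expect M (\<lambda>\<omega>. F \<omega> ** A) = mat_expect M F ** A"
  unfolding mat_integrable_def mat_expect_def by (simp add: vec_eq_iff matrix_matrix_mult_def)

lemma psd_mat_expect:
  assumes "mat_integrable M F" "\<And>\<omega>. psd (F \<omega>)"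
  shows "psd (mat_expect M F)"
proof -
  have "F \<omega> $ j $ i = F \<omega> $ i $ j" for \<omega> i j
    using assms(2)[of \<omega>] unfolding psd_def by (metis transpose_def vec_lambda_beta)
  then have "transpose (mat_expect M F) = mat_expect M F"
    unfolding mat_expect_def transpose_def by (simp add: vec_eq_iff)
  moreover have "x \<bullet> (mat_expect M F *v x) = (\<integral>\<omega>. x \<bullet> (F \<omega> *v x) \<partial>M)" for x
    using assms(1) unfolding mat_integrable_def mat_expect_def
    by (simp add: inner_vec_def matrix_vector_mult_def sum_distrib_left)
  ultimately show ?thesis
    using assms(2) unfolding psd_def by (simp add: integral_nonneg)
qed

lemma psd_dual_mat_expect_outer:
  fixes v :: "'a \<Rightarrow> real^'n"
  assumes "\<And>i j. integrable P (\<lambda>\<omega>. v \<omega> $ i * v \<omega> $ j)"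
  shows "psd_dual (mat_expect P (\<lambda>\<omega>. outer (v \<omega>) (v \<omega>)))"
  unfolding psd_dual_def
proof (intro allI impI)
  fix K :: "real^'n^'n" assume "psd K"
  have "trace (K ** mat_expect P (\<lambda>\<omega>. outer (v \<omega>) (v \<omega>))) =
      (\<Sum>i\<in>UNIV. \<Sum>j\<in>UNIV. K$i$j * (\<integral>\<omega>. v \<omega> $ j * v \<omega> $ i \<partial>P))"
    by (simp add: trace_def matrix_matrix_mult_def mat_expect_def outer_def)
  also have "\<dots> = (\<integral>\<omega>. (\<Sum>i\<in>UNIV. \<Sum>j\<in>UNIV. K$i$j * (v \<omega> $ j * v \<omega> $ i)) \<partial>P)"
    using assms by (simp add: integrable_sum)
  also have "\<dots> = (\<integral>\<omega>. v \<omega> \<bullet> (K *v v \<omega>) \<partial>P)"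
    by (simp add: inner_vec_def matrix_vector_mult_def sum_distrib_left mult_ac)
  also have "\<dots> \<ge> 0"
    using \<open>psd K\<close> unfolding psd_def by (simp add: integral_nonneg)
  finally show "0 \<le> trace (K ** mat_expect P (\<lambda>\<omega>. outer (v \<omega>) (v \<omega>)))" .
qed

lemma psd_mat_expect_outer:
  assumes "\<And>i j. integrable P (\<lambda>\<omega>. v \<omega> $ i * v \<omega> $ j)"
  shows "psd (mat_expect P (\<lambda>\<omega>. outer (v \<omega>) (v \<omega>)))"
  using assms by (intro psd_mat_expect psd_outer) (simp add: mat_integrable_def outer_def)

lemma sandwich_diff_expand:
  fixes A C F :: "real^'n^'n"
  shows "(C - F) ** A ** (C - F) = C ** A ** C - C ** A ** F - F ** A ** C + F ** A ** F"
  by (simp add: matrix_algebra_simps algebra_simps)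

lemma mat_integrable_sandwich_diff:
  fixes F :: "'a \<Rightarrow> real^'n^'n"
  assumes "finite_measure M" "mat_integrable M F" "mat_integrable M (\<lambda>\<omega>. F \<omega> ** A ** F \<omega>)"
  shows "mat_integrable M (\<lambda>\<omega>. (C - F \<omega>) ** A ** (C - F \<omega>))"
  unfolding sandwich_diff_expand using assms
  by (intro mat_integrable_add mat_integrable_diff mat_integrable_const mat_integrable_mult_left
      mat_integrable_mult_right)

lemma mat_expect_sandwich_diff:
  fixes F :: "'a \<Rightarrow> real^'n^'n"
  assumes "prob_space M" "mat_integrable M F" "mat_integrable M (\<lambda>\<omega>. F \<omega> ** A ** F \<omega>)"
  shows "mat_expect M (\<lambda>\<omega>. (C - F \<omega>) ** A ** (C - F \<omega>)) =
    C ** A ** C - C ** A ** mat_expect M F - mat_expect M F ** A ** C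
    + mat_expect M (\<lambda>\<omega>. F \<omega> ** A ** F \<omega>)"
proof -
  have fin: "finite_measure M"
    using assms(1) by (simp add: prob_space_def)
  have CAF: "mat_integrable M (\<lambda>\<omega>. C ** A ** F \<omega>)"
    using assms(2) by (rule mat_integrable_mult_left)
  have FA: "mat_integrable M (\<lambda>\<omega>. F \<omega> ** A)"
    using assms(2) by (rule mat_integrable_mult_right)
  then have FAC: "mat_integrable M (\<lambda>\<omega>. F \<omega> ** A ** C)"
    by (rule mat_integrable_mult_right)
  show ?thesis
    unfolding sandwich_diff_expand
    using assms fin CAF FA FAC
    by (simp add: mat_expect_add mat_expect_diff mat_integrable_add mat_integrable_diff
        mat_integrable_const mat_expect_const mat_expect_mult_left mat_expect_mult_right)
qed

section \<open>The deterministic recursion\<close>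

lemma linear_ITt_op: "linear (ITt_op H \<gamma>)"
  by (rule linearI) (simp_all add: ITt_op_def matrix_algebra_simps algebra_simps)

lemma psd_ITt_op_funpow: "transpose H = H \<Longrightarrow> psd A \<Longrightarrow> psd ((ITt_op H \<gamma> ^^ k) A)"
  by (induction k) (simp_all add: ITt_op_def psd_sandwich transpose_diff transpose_scalar)

lemma ITt_op_mono:
  assumes "transpose H = H" "A \<preceq>\<^sub>L B"
  shows "ITt_op H \<gamma> A \<preceq>\<^sub>L ITt_op H \<gamma> B"
proof -
  let ?Q = "mat 1 - \<gamma> *\<^sub>R H"
  have "ITt_op H \<gamma> B - ITt_op H \<gamma> A = ?Q ** (B - A) ** ?Q"
    by (simp add: ITt_op_def matrix_diff_ldistrib matrix_diff_rdistrib)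
  moreover have "psd (?Q ** (B - A) ** ?Q)"
    using assms unfolding loewner_le_def
    by (intro psd_sandwich) (simp_all add: transpose_diff transpose_scalar)
  ultimately show ?thesis
    unfolding loewner_le_def by simp
qed

lemma trace_mult_ITt_op: "trace (K ** ITt_op H \<gamma> Y) = trace (ITt_op H \<gamma> K ** Y)"
  unfolding ITt_op_def by (metis matrix_mul_assoc trace_mul_sym)

lemma trace_mult_ITt_op_funpow:
  "trace (K ** (ITt_op H \<gamma> ^^ k) Y) = trace ((ITt_op H \<gamma> ^^ k) K ** Y)"
proof (induction k arbitrary: K)
  case 0
  then show ?case by simp
next
  case (Suc k)
  have "trace (K ** (ITt_op H \<gamma> ^^ Suc k) Y) = trace (ITt_op H \<gamma> K ** (ITt_op H \<gamma> ^^ k) Y)"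
    by (simp add: trace_mult_ITt_op)
  also have "\<dots> = trace ((ITt_op H \<gamma> ^^ Suc k) K ** Y)"
    by (simp add: Suc.IH funpow_swap1)
  finally show ?case .
qed

lemma psd_dual_ITt_op_funpow:
  "transpose H = H \<Longrightarrow> psd_dual Y \<Longrightarrow> psd_dual ((ITt_op H \<gamma> ^^ k) Y)"
  unfolding psd_dual_def by (simp add: trace_mult_ITt_op_funpow psd_ITt_op_funpow)

lemma trace_diff_ITt_op:
  "trace Z - trace (ITt_op H \<gamma> Z) = \<gamma> * trace (H ** Z) + \<gamma> * trace ((H - \<gamma> *\<^sub>R (H ** H)) ** Z)"
proof -
  have square: "(mat 1 - \<gamma> *\<^sub>R H) ** (mat 1 - \<gamma> *\<^sub>R H) = mat 1 - \<gamma> *\<^sub>R H - \<gamma> *\<^sub>R (H - \<gamma> *\<^sub>R (H ** H))"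
    by (simp add: matrix_algebra_simps algebra_simps)
  have "trace (ITt_op H \<gamma> Z) = trace ((mat 1 - \<gamma> *\<^sub>R H) ** (mat 1 - \<gamma> *\<^sub>R H) ** Z)"
    using trace_mult_ITt_op[of "mat 1" H \<gamma> Z] by (simp add: ITt_op_def)
  also have "\<dots> = trace (Z - \<gamma> *\<^sub>R (H ** Z) - \<gamma> *\<^sub>R ((H - \<gamma> *\<^sub>R (H ** H)) ** Z))"
    unfolding square by (simp only: matrix_diff_rdistrib scalar_matrix_assoc[symmetric] matrix_mul_lid)
  finally show ?thesis
    unfolding trace_sub trace_scaleR by linarith
qed

lemma sum_trace_H_ITt_op_funpow_le:
  assumes "transpose H = H" "psd (H - \<gamma> *\<^sub>R (H ** H))" "0 \<le> \<gamma>" "psd_dual Y"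
  shows "\<gamma> * (\<Sum>k<n. trace (H ** (ITt_op H \<gamma> ^^ k) Y)) \<le> trace Y - trace ((ITt_op H \<gamma> ^^ n) Y)"
proof (induction n)
  case 0
  then show ?case by simp
next
  case (Suc n)
  let ?Z = "(ITt_op H \<gamma> ^^ n) Y"
  have "0 \<le> trace ((H - \<gamma> *\<^sub>R (H ** H)) ** ?Z)"
    using assms psd_dual_ITt_op_funpow unfolding psd_dual_def by blast
  then have "\<gamma> * trace (H ** ?Z) \<le> trace ?Z - trace (ITt_op H \<gamma> ?Z)"
    using assms(3) trace_diff_ITt_op[of ?Z H \<gamma>] by simp
  with Suc show ?case
    by (simp add: distrib_left)
qed

section \<open>A convolution inequality\<close>

lemma sum_lessThan_triangle_reindex:
  "(\<Sum>j<t. \<Sum>i<j. f i (j - Suc i)) = (\<Sum>i<t. \<Sum>k<t - Suc i. f i k :: real)"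
proof (induction t)
  case 0
  then show ?case by simp
next
  case (Suc t)
  have "(\<Sum>i<Suc t. \<Sum>k<Suc t - Suc i. f i k) = (\<Sum>i<t. \<Sum>k<Suc t - Suc i. f i k)"
    by simp
  also have "\<dots> = (\<Sum>i<t. (\<Sum>k<t - Suc i. f i k) + f i (t - Suc i))"
  proof (rule sum.cong)
    fix i
    assume "i \<in> {..<t}"
    then have "Suc t - Suc i = Suc (t - Suc i)"
      by auto
    then show "(\<Sum>k<Suc t - Suc i. f i k) = (\<Sum>k<t - Suc i. f i k) + f i (t - Suc i)"
      by simp
  qed simp
  finally show ?case
    using Suc by (simp add: sum.distrib)
qed

lemma sum_le_of_convolution_ineq:
  fixes a b d :: "nat \<Rightarrow> real"
  assumes a_le: "\<And>j. a j \<le> d j + g * (\<Sum>i<j. a i * b (j - Suc i))"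
    and a_nonneg: "\<And>i. 0 \<le> a i" and "0 \<le> g"
    and b_sum_le: "\<And>n. (\<Sum>k<n. b k) \<le> \<beta>"
  shows "(\<Sum>j<t. a j) \<le> (\<Sum>j<t. d j) + g * \<beta> * (\<Sum>j<t. a j)"
proof -
  have "(\<Sum>j<t. \<Sum>i<j. a i * b (j - Suc i)) = (\<Sum>i<t. a i * (\<Sum>k<t - Suc i. b k))"
    using sum_lessThan_triangle_reindex[of "\<lambda>i k. a i * b k"] by (simp add: sum_distrib_left)
  also have "\<dots> \<le> (\<Sum>i<t. a i * \<beta>)"
    by (intro sum_mono mult_left_mono a_nonneg b_sum_le)
  also have "\<dots> = \<beta> * (\<Sum>j<t. a j)"
    by (simp add: sum_distrib_left mult.commute)
  finally have "g * (\<Sum>j<t. \<Sum>i<j. a i * b (j - Suc i)) \<le> g * \<beta> * (\<Sum>j<t. a j)"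
    using \<open>0 \<le> g\<close> by (simp add: mult_left_mono mult.assoc)
  moreover have "(\<Sum>j<t. a j) \<le> (\<Sum>j<t. d j) + g * (\<Sum>j<t. \<Sum>i<j. a i * b (j - Suc i))"
    using sum_mono[of "{..<t}", OF a_le] by (simp add: sum.distrib sum_distrib_left)
  ultimately show ?thesis
    by linarith
qed

section \<open>The quantized SGD recursion\<close>

lemma gram_entry: "gram X $ a $ b = (\<Sum>k\<in>UNIV. X$k$a * X$k$b)"
  by (simp add: gram_def matrix_matrix_mult_def transpose_def)

lemma transpose_gram: "transpose (gram X) = gram X"
  by (simp add: gram_def matrix_transpose_mul)

lemma gram_sandwich_entry: "(gram X ** A ** gram X) $ a $ b =
   (\<Sum>l\<in>UNIV. \<Sum>k\<in>UNIV. \<Sum>i\<in>UNIV. \<Sum>j\<in>UNIV. A$k$l * (X$i$a * X$i$k * X$j$l * X$j$b))"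
  by (simp add: matrix_matrix_mult_def gram_entry sum_distrib_left sum_distrib_right mult_ac)

locale quantized_batch =
  fixes M :: "'a measure" and Xq :: "'a \<Rightarrow> real^'n^'b" and H :: "real^'n^'n"
  assumes prob_space_M: "prob_space M"
    and integrable_second_moments: "\<And>i j a b. integrable M (\<lambda>\<omega>. Xq \<omega> $ i $ a * Xq \<omega> $ j $ b)"
    and integrable_fourth_moments: "\<And>i j k l a b c e. integrable M
          (\<lambda>\<omega>. Xq \<omega> $ i $ a * Xq \<omega> $ j $ b * Xq \<omega> $ k $ c * Xq \<omega> $ l $ e)"
    and H_eq: "\<And>i. H = mat_expect M (\<lambda>\<omega>. outer (Xq \<omega> $ i) (Xq \<omega> $ i))"
begin

definition batch_moment :: "'a \<Rightarrow> real^'n^'n" where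
  "batch_moment \<omega> = (1 / real CARD('b)) *\<^sub>R gram (Xq \<omega>)"

lemma transpose_batch_moment: "transpose (batch_moment \<omega>) = batch_moment \<omega>"
  by (simp add: batch_moment_def transpose_scalar transpose_gram)

lemma mat_integrable_batch_moment: "mat_integrable M batch_moment"
  unfolding mat_integrable_def batch_moment_def using integrable_second_moments
  by (simp add: gram_entry)

lemma mat_integrable_batch_moment_sandwich:
  "mat_integrable M (\<lambda>\<omega>. batch_moment \<omega> ** A ** batch_moment \<omega>)"
  unfolding mat_integrable_def batch_moment_def using integrable_fourth_moments
  by (simp add: matrix_scalar_ac scalar_matrix_assoc[symmetric] gram_sandwich_entry)

lemma mat_expect_batch_moment: "mat_expect M batch_moment = H"
proof -
  have "(\<integral>\<omega>. Xq \<omega> $ k $ a * Xq \<omega> $ k $ b \<partial>M) = H $ a $ b" for k a b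
    using H_eq[of k] by (simp add: mat_expect_def outer_def)
  then show ?thesis
    using integrable_second_moments
    by (simp add: vec_eq_iff mat_expect_def batch_moment_def gram_entry)
qed

lemma M_op_eq: "M_op M Xq A = mat_expect M (\<lambda>\<omega>. batch_moment \<omega> ** A ** batch_moment \<omega>)"
  by (simp add: M_op_def batch_moment_def matrix_scalar_ac scalar_matrix_assoc[symmetric]
      power2_eq_square)

lemma IT_op_eq: "IT_op M Xq \<gamma> A =
    mat_expect M (\<lambda>\<omega>. (mat 1 - \<gamma> *\<^sub>R batch_moment \<omega>) ** A ** (mat 1 - \<gamma> *\<^sub>R batch_moment \<omega>))"
  by (simp add: IT_op_def batch_moment_def)

lemma psd_H: "psd H"
  using psd_mat_expect_outer[OF integrable_second_moments] H_eq by metis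

lemma transpose_H: "transpose H = H"
  using psd_H unfolding psd_def by simp

lemma psd_dual_H: "psd_dual H"
  using psd_dual_mat_expect_outer[OF integrable_second_moments] H_eq by metis

lemma IT_op_decomp: "IT_op M Xq \<gamma> A = ITt_op H \<gamma> A + \<gamma>\<^sup>2 *\<^sub>R (M_op M Xq A - H ** A ** H)"
proof -
  have "IT_op M Xq \<gamma> A = A - \<gamma> *\<^sub>R (A ** H) - \<gamma> *\<^sub>R (H ** A) + \<gamma>\<^sup>2 *\<^sub>R M_op M Xq A"
    unfolding IT_op_eq M_op_eq
    using prob_space_M mat_integrable_batch_moment mat_integrable_batch_moment_sandwich
    by (simp add: mat_expect_sandwich_diff mat_integrable_scaleR mat_expect_scaleR
        mat_expect_batch_moment matrix_scalar_ac scalar_matrix_assoc[symmetric] power2_eq_square)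
  then show ?thesis
    by (simp add: ITt_op_def matrix_algebra_simps algebra_simps power2_eq_square)
qed

lemma psd_IT_op: "psd A \<Longrightarrow> psd (IT_op M Xq \<gamma> A)"
  unfolding IT_op_eq using prob_space_M mat_integrable_batch_moment mat_integrable_batch_moment_sandwich
  by (intro psd_mat_expect psd_sandwich mat_integrable_sandwich_diff)
    (simp_all add: prob_space_def mat_integrable_scaleR matrix_scalar_ac scalar_matrix_assoc[symmetric]
      transpose_diff transpose_scalar transpose_batch_moment)

lemma H_sandwich_le_M_op: "psd A \<Longrightarrow> H ** A ** H \<preceq>\<^sub>L M_op M Xq A"
proof -
  assume "psd A"
  have "M_op M Xq A - H ** A ** H = mat_expect M (\<lambda>\<omega>. (H - batch_moment \<omega>) ** A ** (H - batch_moment \<omega>))"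
    unfolding M_op_eq
    using prob_space_M mat_integrable_batch_moment mat_integrable_batch_moment_sandwich
    by (simp add: mat_expect_sandwich_diff mat_expect_batch_moment)
  also have "psd \<dots>"
    using prob_space_M mat_integrable_batch_moment mat_integrable_batch_moment_sandwich \<open>psd A\<close>
    by (intro psd_mat_expect psd_sandwich mat_integrable_sandwich_diff)
      (simp_all add: prob_space_def transpose_H transpose_diff transpose_batch_moment)
  finally show ?thesis
    unfolding loewner_le_def .
qed

lemma psd_B_iter: "psd B0 \<Longrightarrow> psd (B_iter M Xq \<gamma> B0 k)"
  by (induction k) (simp_all add: B_iter_def psd_IT_op)

lemma psd_S_sum: "psd B0 \<Longrightarrow> psd (S_sum M Xq \<gamma> B0 t)"
  unfolding S_sum_def by (intro psd_sum psd_B_iter)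

end

locale fourth_moment_bound = quantized_batch +
  fixes \<alpha> :: real
  assumes M_op_le: "\<And>A. psd A \<Longrightarrow> M_op M Xq A \<preceq>\<^sub>L (\<alpha> * trace (H ** A)) *\<^sub>R H"
begin

lemma psd_H_minus_H_square:
  assumes "0 \<le> \<gamma>" "\<gamma> * \<alpha> * trace H \<le> 1"
  shows "psd (H - \<gamma> *\<^sub>R (H ** H))"
proof -
  have "H ** mat 1 ** H \<preceq>\<^sub>L M_op M Xq (mat 1)"
    by (rule H_sandwich_le_M_op[OF psd_mat_1])
  also have "\<dots> \<preceq>\<^sub>L (\<alpha> * trace H) *\<^sub>R H"
    using M_op_le[OF psd_mat_1] by simp
  finally have "psd ((\<alpha> * trace H) *\<^sub>R H - H ** H)"
    unfolding loewner_le_def by simp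
  moreover have "H - \<gamma> *\<^sub>R (H ** H) =
      \<gamma> *\<^sub>R ((\<alpha> * trace H) *\<^sub>R H - H ** H) + (1 - \<gamma> * \<alpha> * trace H) *\<^sub>R H"
    by (simp add: algebra_simps)
  ultimately show ?thesis
    using assms psd_H by (simp add: psd_add psd_scaleR)
qed

lemma IT_op_le:
  assumes "psd A"
  shows "IT_op M Xq \<gamma> A \<preceq>\<^sub>L ITt_op H \<gamma> A + (\<gamma>\<^sup>2 * \<alpha> * trace (H ** A)) *\<^sub>R H"
proof -
  have "ITt_op H \<gamma> A + (\<gamma>\<^sup>2 * \<alpha> * trace (H ** A)) *\<^sub>R H - IT_op M Xq \<gamma> A =
      \<gamma>\<^sup>2 *\<^sub>R ((\<alpha> * trace (H ** A)) *\<^sub>R H - M_op M Xq A) + \<gamma>\<^sup>2 *\<^sub>R (H ** A ** H)"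
    by (simp add: IT_op_decomp algebra_simps)
  moreover have "psd ((\<alpha> * trace (H ** A)) *\<^sub>R H - M_op M Xq A)"
    using M_op_le[OF assms] unfolding loewner_le_def .
  moreover have "psd (H ** A ** H)"
    using assms transpose_H by (rule psd_sandwich)
  ultimately show ?thesis
    unfolding loewner_le_def by (simp add: psd_add psd_scaleR)
qed

lemma B_iter_le:
  assumes "psd B0"
  shows "B_iter M Xq \<gamma> B0 j \<preceq>\<^sub>L (ITt_op H \<gamma> ^^ j) B0 +
    (\<Sum>i<j. (\<gamma>\<^sup>2 * \<alpha> * trace (H ** B_iter M Xq \<gamma> B0 i)) *\<^sub>R (ITt_op H \<gamma> ^^ (j - Suc i)) H)"
proof (induction j)
  case 0
  show ?case
    by (simp add: B_iter_def loewner_le_def psd_0)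
next
  case (Suc j)
  let ?C = "ITt_op H \<gamma>" and ?B = "B_iter M Xq \<gamma> B0"
  let ?c = "\<lambda>i. \<gamma>\<^sup>2 * \<alpha> * trace (H ** ?B i)"
  let ?bound = "\<lambda>j. (?C ^^ j) B0 + (\<Sum>i<j. ?c i *\<^sub>R (?C ^^ (j - Suc i)) H)"
  have "?B (Suc j) = IT_op M Xq \<gamma> (?B j)"
    by (simp add: B_iter_def)
  also have "\<dots> \<preceq>\<^sub>L ?C (?B j) + ?c j *\<^sub>R H"
    by (rule IT_op_le[OF psd_B_iter[OF assms]])
  also have "\<dots> \<preceq>\<^sub>L ?C (?bound j) + ?c j *\<^sub>R H"
    using ITt_op_mono[OF transpose_H Suc.IH] unfolding loewner_le_def by simp
  also have "?C (?bound j) + ?c j *\<^sub>R H = ?bound (Suc j)"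
  proof -
    have lin: "linear ?C"
      by (rule linear_ITt_op)
    have "?C ((?C ^^ (j - Suc i)) H) = (?C ^^ (Suc j - Suc i)) H" if "i < j" for i
    proof -
      have "j - i = Suc (j - Suc i)"
        using that by simp
      then show ?thesis
        by simp
    qed
    then have "?C (?bound j) = (?C ^^ Suc j) B0 + (\<Sum>i<j. ?c i *\<^sub>R (?C ^^ (Suc j - Suc i)) H)"
      by (simp add: real_vector.linear_add[OF lin] real_vector.linear_sum[OF lin]
          real_vector.linear_scale[OF lin])
    then show ?thesis
      by simp
  qed
  finally show ?case .
qed

lemma trace_H_B_iter_le:
  assumes "psd B0"
  shows "trace (H ** B_iter M Xq \<gamma> B0 j) \<le> trace (H ** (ITt_op H \<gamma> ^^ j) B0) +
    \<gamma>\<^sup>2 * \<alpha> * (\<Sum>i<j. trace (H ** B_iter M Xq \<gamma> B0 i) * trace (H ** (ITt_op H \<gamma> ^^ (j - Suc i)) H))"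
proof -
  have "0 \<le> trace (H ** ((ITt_op H \<gamma> ^^ j) B0 +
      (\<Sum>i<j. (\<gamma>\<^sup>2 * \<alpha> * trace (H ** B_iter M Xq \<gamma> B0 i)) *\<^sub>R (ITt_op H \<gamma> ^^ (j - Suc i)) H)
      - B_iter M Xq \<gamma> B0 j))"
    using B_iter_le[OF assms, of \<gamma> j] psd_dual_H unfolding loewner_le_def
    by (rule psd_dual_trace_mult_nonneg[rotated])
  then show ?thesis
    by (simp add: matrix_add_ldistrib matrix_diff_ldistrib matrix_sum_ldistrib matrix_scalar_ac
        scalar_matrix_assoc[symmetric] trace_add trace_sub trace_sum trace_scaleR sum_distrib_left
        mult_ac)
qed

lemma trace_H_S_sum_le:
  assumes "0 < \<gamma>" "0 \<le> \<alpha>" "\<gamma> * \<alpha> * trace H \<le> 1" "psd B0" "psd_dual B0"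
  shows "\<gamma> * (1 - \<gamma> * \<alpha> * trace H) * trace (H ** S_sum M Xq \<gamma> B0 t)
    \<le> trace (B0 - (ITt_op H \<gamma> ^^ t) B0)"
proof -
  define a where "a i = trace (H ** B_iter M Xq \<gamma> B0 i)" for i
  define b where "b k = trace (H ** (ITt_op H \<gamma> ^^ k) H)" for k
  define d where "d k = trace (H ** (ITt_op H \<gamma> ^^ k) B0)" for k
  have telescope: "\<gamma> * (\<Sum>k<n. trace (H ** (ITt_op H \<gamma> ^^ k) Y)) \<le> trace Y - trace ((ITt_op H \<gamma> ^^ n) Y)"
    if "psd_dual Y" for Y n
    using assms(1,3) that
    by (intro sum_trace_H_ITt_op_funpow_le transpose_H psd_H_minus_H_square) simp_all
  have "(\<Sum>k<n. b k) \<le> trace H / \<gamma>" for n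
  proof -
    have "0 \<le> trace ((ITt_op H \<gamma> ^^ n) H)"
      by (intro psd_dual_trace_nonneg psd_dual_ITt_op_funpow transpose_H psd_dual_H)
    then show ?thesis
      using telescope[OF psd_dual_H, of n] assms(1) unfolding b_def by (simp add: field_simps)
  qed
  moreover have "0 \<le> a i" for i
    unfolding a_def using psd_dual_H psd_B_iter[OF assms(4)] by (rule psd_dual_trace_mult_nonneg)
  ultimately have "(\<Sum>j<t. a j) \<le> (\<Sum>j<t. d j) + \<gamma>\<^sup>2 * \<alpha> * (trace H / \<gamma>) * (\<Sum>j<t. a j)"
    using assms(2) trace_H_B_iter_le[OF assms(4)] unfolding a_def b_def d_def
    by (intro sum_le_of_convolution_ineq) simp_all
  then have "(1 - \<gamma> * \<alpha> * trace H) * (\<Sum>j<t. a j) \<le> (\<Sum>j<t. d j)"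
    using assms(1) by (simp add: power2_eq_square algebra_simps)
  then have "\<gamma> * ((1 - \<gamma> * \<alpha> * trace H) * (\<Sum>j<t. a j)) \<le> \<gamma> * (\<Sum>j<t. d j)"
    using assms(1) by (simp add: mult_left_mono)
  also have "\<dots> \<le> trace (B0 - (ITt_op H \<gamma> ^^ t) B0)"
    using telescope[OF assms(5), of t] unfolding d_def trace_sub .
  also have "(\<Sum>j<t. a j) = trace (H ** S_sum M Xq \<gamma> B0 t)"
    unfolding S_sum_def a_def by (simp add: matrix_sum_ldistrib trace_sum)
  finally show ?thesis
    by (simp add: mult.assoc)
qed

lemma M_op_S_sum_le:
  assumes "0 < \<gamma>" "0 \<le> \<alpha>" "\<gamma> * \<alpha> * trace H < 1" "psd B0" "psd_dual B0"
  shows "M_op M Xq (S_sum M Xq \<gamma> B0 t) \<preceq>\<^sub>L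
    ((\<alpha> * trace (B0 - (ITt_op H \<gamma> ^^ t) B0)) / (\<gamma> * (1 - \<gamma> * \<alpha> * trace H))) *\<^sub>R H"
proof -
  have denom_pos: "0 < \<gamma> * (1 - \<gamma> * \<alpha> * trace H)"
    using assms(1,3) by simp
  have "trace (H ** S_sum M Xq \<gamma> B0 t)
      \<le> trace (B0 - (ITt_op H \<gamma> ^^ t) B0) / (\<gamma> * (1 - \<gamma> * \<alpha> * trace H))"
    unfolding pos_le_divide_eq[OF denom_pos]
    using trace_H_S_sum_le[of \<gamma> B0 t] assms by (simp add: mult_ac)
  then have "\<alpha> * trace (H ** S_sum M Xq \<gamma> B0 t)
      \<le> (\<alpha> * trace (B0 - (ITt_op H \<gamma> ^^ t) B0)) / (\<gamma> * (1 - \<gamma> * \<alpha> * trace H))"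
    using mult_left_mono assms(2) by fastforce
  have "M_op M Xq (S_sum M Xq \<gamma> B0 t) \<preceq>\<^sub>L (\<alpha> * trace (H ** S_sum M Xq \<gamma> B0 t)) *\<^sub>R H"
    by (rule M_op_le[OF psd_S_sum[OF assms(4)]])
  also have "\<dots> \<preceq>\<^sub>L
      ((\<alpha> * trace (B0 - (ITt_op H \<gamma> ^^ t) B0)) / (\<gamma> * (1 - \<gamma> * \<alpha> * trace H))) *\<^sub>R H"
    by (rule loewner_le_scaleR_right[OF psd_H]) fact
  finally show ?thesis .
qed

end

theorem lemmaD8:
  fixes M :: "'a measure" and Xq :: "'a \<Rightarrow> real^'n^'b"
    and P :: "'c measure" and eta0 :: "'c \<Rightarrow> real^'n"
    and H B0 :: "real^'n^'n" and \<alpha> \<gamma> :: real and t N :: nat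
  assumes probM: "prob_space M"
    and indep: "prob_space.indep_vars M (\<lambda>_. borel) (\<lambda>i \<omega>. Xq \<omega> $ i) UNIV"
    and ident: "\<And>i j. distr M borel (\<lambda>\<omega>. Xq \<omega> $ i) = distr M borel (\<lambda>\<omega>. Xq \<omega> $ j)"
    and int2: "\<And>i j a b. integrable M (\<lambda>\<omega>. Xq \<omega> $ i $ a * Xq \<omega> $ j $ b)"
    and int4: "\<And>i j k l a b c e. integrable M
                 (\<lambda>\<omega>. Xq \<omega> $ i $ a * Xq \<omega> $ j $ b * Xq \<omega> $ k $ c * Xq \<omega> $ l $ e)"
    and H_def: "\<And>i. H = mat_expect M (\<lambda>\<omega>. outer (Xq \<omega> $ i) (Xq \<omega> $ i))"
    and H_pd: "pos_def H"
    and fourth: "\<And>A. psd A \<Longrightarrow> M_op M Xq A \<preceq>\<^sub>L (\<alpha> * trace (H ** A)) *\<^sub>R H"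
    and probP: "prob_space P"
    and intP: "\<And>i j. integrable P (\<lambda>\<omega>. eta0 \<omega> $ i * eta0 \<omega> $ j)"
    and B0_def: "B0 = mat_expect P (\<lambda>\<omega>. outer (eta0 \<omega>) (eta0 \<omega>))"
    and gamma_pos: "0 < \<gamma>"
    and gamma_lt: "\<gamma> < 1 / (\<alpha> * trace H)"
    and t_range: "1 \<le> t" "t \<le> N"
  shows "M_op M Xq (S_sum M Xq \<gamma> B0 t) \<preceq>\<^sub>L
           ((\<alpha> * trace (B0 - (ITt_op H \<gamma> ^^ t) B0)) / (\<gamma> * (1 - \<gamma> * \<alpha> * trace H))) *\<^sub>R H"
proof -
  interpret fourth_moment_bound M Xq H \<alpha>
    using probM int2 int4 H_def fourth
    by (intro fourth_moment_bound.intro quantized_batch.intro fourth_moment_bound_axioms.intro)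
  have "0 < \<alpha> * trace H"
  proof (rule ccontr)
    assume "\<not> 0 < \<alpha> * trace H"
    then have "1 / (\<alpha> * trace H) \<le> 0"
      by simp
    with gamma_pos gamma_lt show False
      by linarith
  qed
  then have "0 < \<alpha>"
    using psd_dual_trace_nonneg[OF psd_dual_H] by (auto simp: zero_less_mult_iff)
  have "\<gamma> * \<alpha> * trace H < 1"
    using gamma_lt pos_less_divide_eq[OF \<open>0 < \<alpha> * trace H\<close>] by (simp add: mult.assoc)
  moreover have "psd B0" "psd_dual B0"
    unfolding B0_def using intP by (auto intro: psd_mat_expect_outer psd_dual_mat_expect_outer)
  ultimately show ?thesis
    by (rule M_op_S_sum_le[OF gamma_pos less_imp_le[OF \<open>0 < \<alpha>\<close>]])
qed

end
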